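(* Let $0<\alpha<\delta<1$ and $t>0$. Then $$_{-\infty }I_{t}^{\alpha }\left\vert t\right\vert ^{-\delta }=\frac{\Gamma(\delta-\alpha)}{\Gamma(\delta)}\,\frac{\cos\left(\frac{\pi\delta}{2}-\pi\alpha\right)}{\cos\left(\frac{\pi\delta}{2}\right)}\,t^{\alpha-\delta},$$ that is, $$\frac{1}{\Gamma(\alpha)}\int_{-\infty}^{t}(t-\tau)^{\alpha-1}|\tau|^{-\delta}\,d\tau=\frac{\Gamma(\delta-\alpha)}{\Gamma(\delta)}\,\frac{\cos\left(\frac{\pi\delta}{2}-\pi\alpha\right)}{\cos\left(\frac{\pi\delta}{2}\right)}\,t^{\alpha-\delta}.$$
   Context: For $\alpha>0$ the Weyl fractional integral of a function $f$ is $_{-\infty }I_{t}^{\alpha }f(t)=\frac{1}{\Gamma(\alpha)}\int_{-\infty}^{t}(t-\tau)^{\alpha-1}f(\tau)\,d\tau$. Here $\Gamma$ is Euler's gamma function. *)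

theory Defs
  imports "HOL-Analysis.Analysis"
begin

text \<open>Weyl fractional integral of order alpha of f at t, as a Lebesgue integral over the
  half-line (-infinity, t]. Since the integrand may be singular at finitely many points,
  values at single points are irrelevant.\<close>
definition weyl_integral :: "real \<Rightarrow> (real \<Rightarrow> real) \<Rightarrow> real \<Rightarrow> real" where
  "weyl_integral \<alpha> f t =
     (1 / Gamma \<alpha>) * (LINT \<tau>:{..t}|lborel. (t - \<tau>) powr (\<alpha> - 1) * f \<tau>)"

end

theory Submission
  imports Defs
begin

text \<open>Split the integral at \<open>0\<close>. The substitutions \<open>\<tau> = t v\<close> on \<open>[0, t]\<close> and
  \<open>\<tau> = - t v / (1 - v)\<close> on \<open>(-\<infinity>, 0)\<close> turn the two pieces into \<open>t powr (\<alpha> - \<delta>)\<close>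
  times \<open>B(1 - \<delta>, \<alpha>)\<close> and \<open>B(1 - \<delta>, \<delta> - \<alpha>)\<close> respectively. The reflection formula
  \<open>\<Gamma>(x) \<Gamma>(1 - x) = \<pi> / sin (\<pi> x)\<close>, applied at \<open>\<delta>\<close>, \<open>\<delta> - \<alpha>\<close> and \<open>\<alpha>\<close>, reduces
  \<open>(B(1 - \<delta>, \<delta> - \<alpha>) + B(1 - \<delta>, \<alpha>)) / \<Gamma>(\<alpha>)\<close> to
  \<open>\<Gamma>(\<delta> - \<alpha>) / \<Gamma>(\<delta>) * (sin (\<pi> (\<delta> - \<alpha>)) + sin (\<pi> \<alpha>)) / sin (\<pi> \<delta>)\<close>; sum-to-product and
  the double angle formula turn this sine quotient into the cosine quotient.\<close>

lemma Gamma_reflection_real: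
  fixes x :: real
  shows "Gamma x * Gamma (1 - x) = pi / sin (pi * x)"
proof -
  have "complex_of_real (Gamma x * Gamma (1 - x)) = complex_of_real (pi / sin (pi * x))"
    using Gamma_reflection_complex[of "complex_of_real x"]
    by (simp add: Gamma_complex_of_real[symmetric] sin_of_real[symmetric])
  then show ?thesis by (simp only: of_real_eq_iff)
qed

lemma sin_diff_plus_sin_div_sin:
  fixes x y :: real
  assumes "sin (x / 2) \<noteq> 0"
  shows "(sin (x - y) + sin y) / sin x = cos (x / 2 - y) / cos (x / 2)"
proof -
  have "sin (x - y) + sin y = 2 * sin (x / 2) * cos (x / 2 - y)"
    by (simp add: sin_plus_sin diff_divide_distrib)
  moreover have "sin x = 2 * sin (x / 2) * cos (x / 2)"
    using sin_double[of "x / 2"] by simp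
  ultimately show ?thesis
    using assms by simp
qed

lemma Beta_sum_eq_sin_ratio:
  fixes a d :: real
  assumes "0 < a" "a < d" "d < 1"
  shows "Beta (1 - d) (d - a) + Beta (1 - d) a =
    Gamma a * Gamma (d - a) / Gamma d * ((sin (pi * (d - a)) + sin (pi * a)) / sin (pi * d))"
proof -
  have sin_pos: "sin (pi * d) > 0" "sin (pi * (d - a)) > 0" "sin (pi * a) > 0"
    using assms by (auto intro!: sin_gt_zero)
  have Gamma_pos: "Gamma a > 0" "Gamma d > 0" "Gamma (d - a) > 0"
    using assms by auto
  have reflect_d: "Gamma (1 - d) = pi / (sin (pi * d) * Gamma d)"
    using Gamma_reflection_real[of d] Gamma_pos sin_pos by (simp add: field_simps)
  have reflect_d_a: "Gamma (1 - d + a) = pi / (sin (pi * (d - a)) * Gamma (d - a))"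
    using Gamma_reflection_real[of "d - a"] Gamma_pos sin_pos by (simp add: field_simps)
  have reflect_a: "Gamma (1 - d + (d - a)) = pi / (sin (pi * a) * Gamma a)"
    using Gamma_reflection_real[of a] Gamma_pos sin_pos by (simp add: field_simps)
  show ?thesis
    unfolding Beta_def reflect_d reflect_d_a reflect_a using Gamma_pos sin_pos
    by (simp add: field_simps)
qed

lemma Beta_sum_div_Gamma_eq_cos_ratio:
  fixes a d :: real
  assumes "0 < a" "a < d" "d < 1"
  shows "(Beta (1 - d) (d - a) + Beta (1 - d) a) / Gamma a =
    Gamma (d - a) / Gamma d * (cos (pi * d / 2 - pi * a) / cos (pi * d / 2))"
proof -
  have "sin (pi * d / 2) \<noteq> 0"
    using assms by (intro sin_gt_zero[THEN less_imp_neq, symmetric]) auto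
  then have "(sin (pi * d - pi * a) + sin (pi * a)) / sin (pi * d) =
      cos (pi * d / 2 - pi * a) / cos (pi * d / 2)"
    using sin_diff_plus_sin_div_sin[of "pi * d" "pi * a"] by simp
  moreover have "Gamma a > 0"
    using assms by simp
  ultimately show ?thesis
    using Beta_sum_eq_sin_ratio[OF assms] by (simp add: right_diff_distrib)
qed

lemma has_integral_substitution_nonneg:
  fixes f g g' :: "real \<Rightarrow> real"
  assumes "S \<in> sets lebesgue"
    and "\<And>x. x \<in> S \<Longrightarrow> (g has_field_derivative g' x) (at x within S)"
    and "inj_on g S"
    and "\<And>x. x \<in> S \<Longrightarrow> 0 \<le> f (g x)"
    and "((\<lambda>x. \<bar>g' x\<bar> * f (g x)) has_integral I) S"
  shows "(f has_integral I) (g ` S)"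
proof -
  have "(\<lambda>x. \<bar>g' x\<bar> * f (g x)) absolutely_integrable_on S"
    using assms(4,5) by (intro nonnegative_absolutely_integrable_1) (auto simp: has_integral_integrable)
  then have "f absolutely_integrable_on g ` S \<and> integral (g ` S) f = I"
    using has_absolute_integral_change_of_variables_1'[OF assms(1-3)] integral_unique[OF assms(5)]
    by blast
  then show ?thesis
    by (metis integrable_integral set_lebesgue_integral_eq_integral(1))
qed

lemma has_integral_Beta_segment:
  fixes a b t :: real
  assumes "0 < a" "0 < b" "0 < t"
  shows "((\<lambda>\<tau>. \<tau> powr (a - 1) * (t - \<tau>) powr (b - 1)) has_integral t powr (a + b - 1) * Beta a b) {0..t}"
proof -
  define f where "f = (\<lambda>\<tau>::real. \<tau> powr (a - 1) * (t - \<tau>) powr (b - 1))"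
  have "((\<lambda>v. t powr (a + b - 1) * (v powr (a - 1) * (1 - v) powr (b - 1))) has_integral
      t powr (a + b - 1) * Beta a b) {0<..<1}"
    unfolding has_integral_Icc_iff_Ioo[symmetric]
    using assms by (intro has_integral_mult_right has_integral_Beta_real) auto
  moreover have "\<bar>t\<bar> * f (t * v) = t powr (a + b - 1) * (v powr (a - 1) * (1 - v) powr (b - 1))"
    if "v \<in> {0<..<1}" for v
  proof -
    have v: "0 < v" "0 < 1 - v"
      using that by auto
    have factor: "t - t * v = t * (1 - v)"
      by (simp add: algebra_simps)
    have "ln (\<bar>t\<bar> * f (t * v)) = ln (t powr (a + b - 1) * (v powr (a - 1) * (1 - v) powr (b - 1)))"
      using v assms by (simp add: f_def factor ln_mult ln_powr) (simp add: algebra_simps)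
    then show ?thesis
      using v assms by (simp add: f_def factor ln_inj_iff)
  qed
  ultimately have "((\<lambda>v. \<bar>t\<bar> * f (t * v)) has_integral t powr (a + b - 1) * Beta a b) {0<..<1}"
    by (metis (no_types, lifting) has_integral_eq)
  then have "(f has_integral t powr (a + b - 1) * Beta a b) ((*) t ` {0<..<1})"
    unfolding f_def using assms
    by (intro has_integral_substitution_nonneg) (auto intro!: derivative_eq_intros inj_onI)
  moreover have "(*) t ` {0<..<1} = {0<..<t}"
    using assms by (auto simp: image_iff field_simps intro!: bexI[of _ "_ / t"])
  ultimately show ?thesis
    unfolding f_def has_integral_Icc_iff_Ioo by simp
qed

lemma bij_betw_unit_interval_negative_half_line:
  fixes t :: real
  assumes "0 < t"
  shows "bij_betw (\<lambda>v. - (t * v / (1 - v))) {0<..<1} {..<0}"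
proof (rule bij_betw_byWitness[where f' = "\<lambda>\<tau>. - \<tau> / (t - \<tau>)"])
  show "\<forall>v \<in> {0<..<1}. - (- (t * v / (1 - v))) / (t - - (t * v / (1 - v))) = v"
    using assms by (auto simp: field_simps)
  show "\<forall>\<tau> \<in> {..<0}. - (t * (- \<tau> / (t - \<tau>)) / (1 - - \<tau> / (t - \<tau>))) = \<tau>"
    using assms by (auto simp: field_simps)
  show "(\<lambda>v. - (t * v / (1 - v))) ` {0<..<1} \<subseteq> {..<0}"
    using assms by auto
  show "(\<lambda>\<tau>. - \<tau> / (t - \<tau>)) ` {..<0} \<subseteq> {0<..<1}"
    using assms by (auto simp: field_simps)
qed

lemma has_integral_Beta_negative_half_line:
  fixes a b t :: real
  assumes "0 < a" "0 < b" "0 < t"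
  shows "((\<lambda>\<tau>. \<bar>\<tau>\<bar> powr (a - 1) * (t - \<tau>) powr (- (a + b))) has_integral t powr (- b) * Beta a b) {..<0}"
proof -
  define f where "f = (\<lambda>\<tau>::real. \<bar>\<tau>\<bar> powr (a - 1) * (t - \<tau>) powr (- (a + b)))"
  define g where "g = (\<lambda>v::real. - (t * v / (1 - v)))"
  define g' where "g' = (\<lambda>v::real. - (t / (1 - v)\<^sup>2))"
  have "((\<lambda>v. t powr (- b) * (v powr (a - 1) * (1 - v) powr (b - 1))) has_integral
      t powr (- b) * Beta a b) {0<..<1}"
    unfolding has_integral_Icc_iff_Ioo[symmetric]
    using assms by (intro has_integral_mult_right has_integral_Beta_real) auto
  moreover have "\<bar>g' v\<bar> * f (g v) = t powr (- b) * (v powr (a - 1) * (1 - v) powr (b - 1))"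
    if "v \<in> {0<..<1}" for v
  proof -
    have v: "0 < v" "0 < 1 - v"
      using that by auto
    have subst: "\<bar>g' v\<bar> = t / (1 - v)\<^sup>2" "\<bar>g v\<bar> = t * v / (1 - v)" "t - g v = t / (1 - v)"
      unfolding g_def g'_def using v assms by (auto simp: field_simps)
    have "ln (\<bar>g' v\<bar> * f (g v)) = ln (t powr (- b) * (v powr (a - 1) * (1 - v) powr (b - 1)))"
      unfolding f_def subst using v assms by (simp add: ln_mult ln_div ln_powr ln_realpow algebra_simps)
    then show ?thesis
      unfolding f_def subst using v assms by (simp add: ln_inj_iff)
  qed
  ultimately have "((\<lambda>v. \<bar>g' v\<bar> * f (g v)) has_integral t powr (- b) * Beta a b) {0<..<1}"
    by (metis (no_types, lifting) has_integral_eq)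
  moreover have "(g has_field_derivative g' v) (at v within {0<..<1})" if "v \<in> {0<..<1}" for v
    using that unfolding g_def g'_def
    by (auto intro!: derivative_eq_intros simp: field_simps power2_eq_square)
  moreover have "inj_on g {0<..<1}" and image: "g ` {0<..<1} = {..<0}"
    using bij_betw_unit_interval_negative_half_line[OF assms(3)] unfolding g_def bij_betw_def by auto
  ultimately have "(f has_integral t powr (- b) * Beta a b) (g ` {0<..<1})"
    using has_integral_substitution_nonneg[of "{0<..<1}" g g' f] by (auto simp: f_def)
  then show ?thesis
    unfolding image f_def .
qed

lemma set_borel_integral_eq_has_integral_nonneg:
  fixes f :: "'a::euclidean_space \<Rightarrow> real"
  assumes "(f has_integral I) S" "\<And>x. x \<in> S \<Longrightarrow> 0 \<le> f x" "set_borel_measurable lborel S f"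
  shows "set_integrable lborel S f" "(LINT x:S|lborel. f x) = I"
proof -
  have "f absolutely_integrable_on S"
    using assms(1,2) by (intro nonnegative_absolutely_integrable_1) (auto simp: has_integral_integrable)
  then show integrable: "set_integrable lborel S f"
    using assms(3) unfolding set_integrable_def set_borel_measurable_def
    by (simp add: integrable_completion)
  show "(LINT x:S|lborel. f x) = I"
    using set_borel_integral_eq_integral(2)[OF integrable] assms(1) by (simp add: integral_unique)
qed

theorem theorem2:
  fixes \<alpha> \<delta> t :: real
  assumes "0 < \<alpha>" and "\<alpha> < \<delta>" and "\<delta> < 1" and "0 < t"
  shows "set_integrable lborel {..t} (\<lambda>\<tau>. (t - \<tau>) powr (\<alpha> - 1) * \<bar>\<tau>\<bar> powr (- \<delta>)) \<and>
         weyl_integral \<alpha> (\<lambda>\<tau>. \<bar>\<tau>\<bar> powr (- \<delta>)) t =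
           Gamma (\<delta> - \<alpha>) / Gamma \<delta> *
           (cos (pi * \<delta> / 2 - pi * \<alpha>) / cos (pi * \<delta> / 2)) * t powr (\<alpha> - \<delta>)"
proof -
  define f where "f = (\<lambda>\<tau>::real. (t - \<tau>) powr (\<alpha> - 1) * \<bar>\<tau>\<bar> powr (- \<delta>))"
  have "(f has_integral t powr (\<alpha> - \<delta>) * Beta (1 - \<delta>) (\<delta> - \<alpha>)) {..<0}"
    using has_integral_Beta_negative_half_line[of "1 - \<delta>" "\<delta> - \<alpha>" t] assms
    unfolding f_def by (simp add: mult.commute)
  moreover have "((\<lambda>\<tau>. \<tau> powr (- \<delta>) * (t - \<tau>) powr (\<alpha> - 1)) has_integral
      t powr (\<alpha> - \<delta>) * Beta (1 - \<delta>) \<alpha>) {0..t}"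
    using has_integral_Beta_segment[of "1 - \<delta>" \<alpha> t] assms by (simp add: mult.commute)
  then have "(f has_integral t powr (\<alpha> - \<delta>) * Beta (1 - \<delta>) \<alpha>) {0..t}"
    by (rule has_integral_eq[rotated]) (simp add: f_def mult.commute)
  ultimately have "(f has_integral t powr (\<alpha> - \<delta>) * Beta (1 - \<delta>) (\<delta> - \<alpha>) +
      t powr (\<alpha> - \<delta>) * Beta (1 - \<delta>) \<alpha>) ({..<0} \<union> {0..t})"
    by (rule has_integral_Un) (auto intro: negligible_subset[OF negligible_empty])
  moreover have "{..<0} \<union> {0..t} = {..t}"
    using assms by auto
  ultimately have integrable: "set_integrable lborel {..t} f" and
    integral: "(LINT \<tau>:{..t}|lborel. f \<tau>) =
      t powr (\<alpha> - \<delta>) * (Beta (1 - \<delta>) (\<delta> - \<alpha>) + Beta (1 - \<delta>) \<alpha>)"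
    by (auto intro!: set_borel_integral_eq_has_integral_nonneg
        simp: f_def set_borel_measurable_def distrib_left)
  have "weyl_integral \<alpha> (\<lambda>\<tau>. \<bar>\<tau>\<bar> powr (- \<delta>)) t =
      (Beta (1 - \<delta>) (\<delta> - \<alpha>) + Beta (1 - \<delta>) \<alpha>) / Gamma \<alpha> * t powr (\<alpha> - \<delta>)"
    unfolding weyl_integral_def f_def[symmetric] integral by simp
  then show ?thesis
    using integrable Beta_sum_div_Gamma_eq_cos_ratio[OF assms(1-3)] unfolding f_def by simp
qed

end
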